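(* Let $(A,\cdot,\omega)$ be a symmetric twisted partial $H$-module algebra and let $u,v\in\mathrm{Hom}(H,A)$ be weakly convolution-invertible linear maps, such that $v*u$ is weakly convolution-invertible with $(v*u)^{-1}=u^{-1}*v^{-1}$. Then $\omega^{v*u}=(\omega^{u})^{v}$ and $\cdot^{v*u}=(\cdot^{u})^{v}$, i.e. $h\cdot^{v*u}a=h(\cdot^u)^v a$ for all $h\in H$, $a\in A$, where $(\omega^u)^v$ and $(\cdot^u)^v$ denote the transforms by $v$ of the pair $(\omega^u,\cdot^u)$.
   Context: $k$ a field, $H$ a Hopf algebra over $k$ with Sweedler notation $\Delta(h)=h_{(1)}\otimes h_{(2)}$, counit $\varepsilon$, antipode $S$; $A$ a unital $k$-algebra. A twisted partial action of $H$ on $A$ is a pair of linear maps $h\otimes a\mapsto h\cdot a$ and $\omega:H\otimes H\to A$ with $1_H\cdot a=a$, $h\cdot(ab)=(h_{(1)}\cdot a)(h_{(2)}\cdot b)$, $(h_{(1)}\cdot(l_{(1)}\cdot a))\omega(h_{(2)},l_{(2)})=\omega(h_{(1)},l_{(1)})(h_{(2)}l_{(2)}\cdot a)$, $\omega(h,l)=\omega(h_{(1)},l_{(1)})(h_{(2)}l_{(2)}\cdot 1_A)$. Convolution on $\mathrm{Hom}(H,A)$: $(f*g)(h)=f(h_{(1)})g(h_{(2)})$, and similarly on $\mathrm{Hom}(H\otimes H,A)$. Let $e(h)=h\cdot1_A$, $f_1(h,k)=(h\cdot 1_A)\varepsilon(k)$, $f_2(h,k)=hk\cdot 1_A$. The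 twisted partial action is symmetric if: $e$ is central in $\mathrm{Hom}(H,A)$; $f_1,f_2$ are central in $\mathrm{Hom}(H\otimes H,A)$; $\omega$ satisfies (N) $\omega(1_H,h)=\omega(h,1_H)=h\cdot 1_A$ and (T3) above, and has a convolution inverse $\omega'$ in the ideal generated by $f_1*f_2$ (i.e. $\omega*\omega'=\omega'*\omega=f_1*f_2$); and $h\cdot(k\cdot 1_A)=(h_{(1)}\cdot 1_A)(h_{(2)}k\cdot 1_A)$ for all $h,k$. A linear map $v\in\mathrm{Hom}(H,A)$ is weakly convolution-invertible if there is $u\in\mathrm{Hom}(H,A)$ with $u*v=v*u=e$, $u(h)=u(h_{(1)})(h_{(2)}\cdot1_A)=(h_{(1)}\cdot1_A)u(h_{(2)})$ and $u(1_H)=v(1_H)=1_A$; write $v^{-1}=u$. For such $v$ define $\omega^v(h,g)=v(h_{(1)})(h_{(2)}\cdot v(g_{(1)}))\omega(h_{(3)},g_{(2)})v^{-1}(h_{(4)}g_{(3)})$ and $h\cdot^v a=v(h_{(1)})(h_{(2)}\cdot a)v^{-1}(h_{(3)})$. *)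

theory Defs
  imports Complex_Main
begin

text \<open>
Conventions.
  \<^item> The field k is a type 'k :: field.
  \<^item> H is a type 'h :: ring_1 (its multiplication and unit) with scalar multiplication
    smH :: 'k => 'h => 'h; A is a type 'a :: ring_1 with scalar multiplication smA.
  \<^item> Linear maps are Vector_Spaces.linear; maps on H \<otimes> H are bilinear maps on H \<times> H.
  \<^item> The comultiplication is given in Sweedler form: Delta h is a finite list of pairs
    (h1_i, h2_i) with Delta(h) = sum_i h1_i \<otimes> h2_i.  Equalities in tensor powers
    of H are expressed by testing against all k-valued multilinear forms
    (which separate points of H \<otimes> H and H \<otimes> H \<otimes> H).
  \<^item> Iterated Sweedler notation: h(1) \<otimes> h(2) \<otimes> h(3) = (Delta \<otimes> id) Delta h etc.
    All expressions in which it is used are multilinear, hence well defined.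
\<close>

definition bilin :: "('k::field \<Rightarrow> 'b::ab_group_add \<Rightarrow> 'b) \<Rightarrow> ('k \<Rightarrow> 'c::ab_group_add \<Rightarrow> 'c)
    \<Rightarrow> ('k \<Rightarrow> 'd::ab_group_add \<Rightarrow> 'd) \<Rightarrow> ('b \<Rightarrow> 'c \<Rightarrow> 'd) \<Rightarrow> bool" where
  "bilin s1 s2 s3 F \<longleftrightarrow>
     (\<forall>x. Vector_Spaces.linear s2 s3 (F x)) \<and> (\<forall>y. Vector_Spaces.linear s1 s3 (\<lambda>x. F x y))"

definition trilin :: "('k::field \<Rightarrow> 'b::ab_group_add \<Rightarrow> 'b) \<Rightarrow> ('k \<Rightarrow> 'd::ab_group_add \<Rightarrow> 'd)
    \<Rightarrow> ('b \<Rightarrow> 'b \<Rightarrow> 'b \<Rightarrow> 'd) \<Rightarrow> bool" where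
  "trilin s1 s3 F \<longleftrightarrow>
     (\<forall>y z. Vector_Spaces.linear s1 s3 (\<lambda>x. F x y z)) \<and>
     (\<forall>x z. Vector_Spaces.linear s1 s3 (\<lambda>y. F x y z)) \<and>
     (\<forall>x y. Vector_Spaces.linear s1 s3 (\<lambda>z. F x y z))"

abbreviation kscale :: "'k::field \<Rightarrow> 'k \<Rightarrow> 'k" where "kscale \<equiv> (*)"

definition k_algebra :: "('k::field \<Rightarrow> 'r::ring_1 \<Rightarrow> 'r) \<Rightarrow> bool" where
  "k_algebra sm \<longleftrightarrow> vector_space sm \<and>
     (\<forall>c x y. sm c (x * y) = sm c x * y \<and> sm c (x * y) = x * sm c y)"

definition Delta3 :: "('h \<Rightarrow> ('h \<times> 'h) list) \<Rightarrow> 'h \<Rightarrow> ('h \<times> 'h \<times> 'h) list" where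
  "Delta3 \<Delta> h = concat (map (\<lambda>(x, y). map (\<lambda>(x1, x2). (x1, x2, y)) (\<Delta> x)) (\<Delta> h))"

definition Delta4 :: "('h \<Rightarrow> ('h \<times> 'h) list) \<Rightarrow> 'h \<Rightarrow> ('h \<times> 'h \<times> 'h \<times> 'h) list" where
  "Delta4 \<Delta> h = concat (map (\<lambda>(x, y, z). map (\<lambda>(x1, x2). (x1, x2, y, z)) (\<Delta> x)) (Delta3 \<Delta> h))"

definition hopf_algebra :: "('k::field \<Rightarrow> 'h::ring_1 \<Rightarrow> 'h) \<Rightarrow> ('h \<Rightarrow> ('h \<times> 'h) list)
    \<Rightarrow> ('h \<Rightarrow> 'k) \<Rightarrow> ('h \<Rightarrow> 'h) \<Rightarrow> bool" where
  "hopf_algebra smH \<Delta> \<epsilon> S \<longleftrightarrow>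
     k_algebra smH \<and>
     \<comment> \<open>Delta is linear\<close>
     (\<forall>F. bilin smH smH kscale F \<longrightarrow>
        (\<forall>g h. (\<Sum>(x, y)\<leftarrow>\<Delta> (g + h). F x y) = (\<Sum>(x, y)\<leftarrow>\<Delta> g. F x y) + (\<Sum>(x, y)\<leftarrow>\<Delta> h. F x y)) \<and>
        (\<forall>c h. (\<Sum>(x, y)\<leftarrow>\<Delta> (smH c h). F x y) = c * (\<Sum>(x, y)\<leftarrow>\<Delta> h. F x y))) \<and>
     \<comment> \<open>coassociativity\<close>
     (\<forall>F. trilin smH kscale F \<longrightarrow>
        (\<forall>h. (\<Sum>(x, y)\<leftarrow>\<Delta> h. \<Sum>(x1, x2)\<leftarrow>\<Delta> x. F x1 x2 y) =
             (\<Sum>(x, y)\<leftarrow>\<Delta> h. \<Sum>(y1, y2)\<leftarrow>\<Delta> y. F x y1 y2))) \<and>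
     \<comment> \<open>counit\<close>
     Vector_Spaces.linear smH kscale \<epsilon> \<and>
     (\<forall>h. (\<Sum>(x, y)\<leftarrow>\<Delta> h. smH (\<epsilon> x) y) = h) \<and>
     (\<forall>h. (\<Sum>(x, y)\<leftarrow>\<Delta> h. smH (\<epsilon> y) x) = h) \<and>
     \<comment> \<open>Delta and epsilon are algebra maps\<close>
     (\<forall>F. bilin smH smH kscale F \<longrightarrow>
        (\<forall>g h. (\<Sum>(x, y)\<leftarrow>\<Delta> (g * h). F x y) =
               (\<Sum>(a, b)\<leftarrow>\<Delta> g. \<Sum>(c, d)\<leftarrow>\<Delta> h. F (a * c) (b * d))) \<and>
        (\<Sum>(x, y)\<leftarrow>\<Delta> 1. F x y) = F 1 1) \<and>
     (\<forall>g h. \<epsilon> (g * h) = \<epsilon> g * \<epsilon> h) \<and> \<epsilon> 1 = 1 \<and>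
     \<comment> \<open>antipode\<close>
     Vector_Spaces.linear smH smH S \<and>
     (\<forall>h. (\<Sum>(x, y)\<leftarrow>\<Delta> h. S x * y) = smH (\<epsilon> h) 1) \<and>
     (\<forall>h. (\<Sum>(x, y)\<leftarrow>\<Delta> h. x * S y) = smH (\<epsilon> h) 1)"

definition conv :: "('h \<Rightarrow> ('h \<times> 'h) list) \<Rightarrow> ('h \<Rightarrow> 'a::ring_1) \<Rightarrow> ('h \<Rightarrow> 'a) \<Rightarrow> 'h \<Rightarrow> 'a" where
  "conv \<Delta> f g h = (\<Sum>(x, y)\<leftarrow>\<Delta> h. f x * g y)"

definition conv2 :: "('h \<Rightarrow> ('h \<times> 'h) list) \<Rightarrow> ('h \<Rightarrow> 'h \<Rightarrow> 'a::ring_1) \<Rightarrow> ('h \<Rightarrow> 'h \<Rightarrow> 'a)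
    \<Rightarrow> 'h \<Rightarrow> 'h \<Rightarrow> 'a" where
  "conv2 \<Delta> F G h l = (\<Sum>(h1, h2)\<leftarrow>\<Delta> h. \<Sum>(l1, l2)\<leftarrow>\<Delta> l. F h1 l1 * G h2 l2)"

definition twisted_partial_action :: "('k::field \<Rightarrow> 'h::ring_1 \<Rightarrow> 'h) \<Rightarrow> ('k \<Rightarrow> 'a::ring_1 \<Rightarrow> 'a)
    \<Rightarrow> ('h \<Rightarrow> ('h \<times> 'h) list) \<Rightarrow> ('h \<Rightarrow> 'a \<Rightarrow> 'a) \<Rightarrow> ('h \<Rightarrow> 'h \<Rightarrow> 'a) \<Rightarrow> bool" where
  "twisted_partial_action smH smA \<Delta> act \<omega> \<longleftrightarrow>
     bilin smH smA smA act \<and> bilin smH smH smA \<omega> \<and>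
     (\<forall>a. act 1 a = a) \<and>
     (\<forall>h a b. act h (a * b) = (\<Sum>(x, y)\<leftarrow>\<Delta> h. act x a * act y b)) \<and>
     (\<forall>h l a. (\<Sum>(h1, h2)\<leftarrow>\<Delta> h. \<Sum>(l1, l2)\<leftarrow>\<Delta> l. act h1 (act l1 a) * \<omega> h2 l2) =
              (\<Sum>(h1, h2)\<leftarrow>\<Delta> h. \<Sum>(l1, l2)\<leftarrow>\<Delta> l. \<omega> h1 l1 * act (h2 * l2) a)) \<and>
     (\<forall>h l. \<omega> h l = (\<Sum>(h1, h2)\<leftarrow>\<Delta> h. \<Sum>(l1, l2)\<leftarrow>\<Delta> l. \<omega> h1 l1 * act (h2 * l2) 1))"

definition symmetric_tpa :: "('k::field \<Rightarrow> 'h::ring_1 \<Rightarrow> 'h) \<Rightarrow> ('k \<Rightarrow> 'a::ring_1 \<Rightarrow> 'a)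
    \<Rightarrow> ('h \<Rightarrow> ('h \<times> 'h) list) \<Rightarrow> ('h \<Rightarrow> 'k) \<Rightarrow> ('h \<Rightarrow> 'a \<Rightarrow> 'a) \<Rightarrow> ('h \<Rightarrow> 'h \<Rightarrow> 'a) \<Rightarrow> bool" where
  "symmetric_tpa smH smA \<Delta> \<epsilon> act \<omega> \<longleftrightarrow>
     twisted_partial_action smH smA \<Delta> act \<omega> \<and>
     (let e = (\<lambda>h. act h 1);
          f1 = (\<lambda>h k. smA (\<epsilon> k) (act h 1));
          f2 = (\<lambda>h k. act (h * k) 1) in
       (\<forall>f. Vector_Spaces.linear smH smA f \<longrightarrow> conv \<Delta> e f = conv \<Delta> f e) \<and>
       (\<forall>F. bilin smH smH smA F \<longrightarrow> conv2 \<Delta> f1 F = conv2 \<Delta> F f1) \<and>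
       (\<forall>F. bilin smH smH smA F \<longrightarrow> conv2 \<Delta> f2 F = conv2 \<Delta> F f2) \<and>
       (\<forall>h. \<omega> 1 h = act h 1 \<and> \<omega> h 1 = act h 1) \<and>
       (\<exists>\<omega>'. bilin smH smH smA \<omega>' \<and>
              conv2 \<Delta> \<omega> \<omega>' = conv2 \<Delta> f1 f2 \<and> conv2 \<Delta> \<omega>' \<omega> = conv2 \<Delta> f1 f2) \<and>
       (\<forall>h k. act h (act k 1) = (\<Sum>(h1, h2)\<leftarrow>\<Delta> h. act h1 1 * act (h2 * k) 1)))"

text \<open>u is a weak convolution inverse of v (so u = v^{-1})\<close>
definition weak_conv_inverse :: "('k::field \<Rightarrow> 'h::ring_1 \<Rightarrow> 'h) \<Rightarrow> ('k \<Rightarrow> 'a::ring_1 \<Rightarrow> 'a)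
    \<Rightarrow> ('h \<Rightarrow> ('h \<times> 'h) list) \<Rightarrow> ('h \<Rightarrow> 'a \<Rightarrow> 'a) \<Rightarrow> ('h \<Rightarrow> 'a) \<Rightarrow> ('h \<Rightarrow> 'a) \<Rightarrow> bool" where
  "weak_conv_inverse smH smA \<Delta> act v u \<longleftrightarrow>
     Vector_Spaces.linear smH smA u \<and>
     conv \<Delta> u v = (\<lambda>h. act h 1) \<and> conv \<Delta> v u = (\<lambda>h. act h 1) \<and>
     (\<forall>h. u h = (\<Sum>(x, y)\<leftarrow>\<Delta> h. u x * act y 1)) \<and>
     (\<forall>h. u h = (\<Sum>(x, y)\<leftarrow>\<Delta> h. act x 1 * u y)) \<and>
     u 1 = 1 \<and> v 1 = 1"

text \<open>The transformed action  h \<cdot>^v a = v(h1)(h2 \<cdot> a)v^{-1}(h3); here vi = v^{-1}\<close>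
definition tw_act :: "('h \<Rightarrow> ('h \<times> 'h) list) \<Rightarrow> ('h \<Rightarrow> 'a::ring_1 \<Rightarrow> 'a) \<Rightarrow> ('h \<Rightarrow> 'a) \<Rightarrow> ('h \<Rightarrow> 'a)
    \<Rightarrow> 'h \<Rightarrow> 'a \<Rightarrow> 'a" where
  "tw_act \<Delta> act v vi h a = (\<Sum>(h1, h2, h3)\<leftarrow>Delta3 \<Delta> h. v h1 * act h2 a * vi h3)"

text \<open>The transformed cocycle
  omega^v(h,g) = v(h1)(h2 \<cdot> v(g1)) omega(h3,g2) v^{-1}(h4 g3); here vi = v^{-1}\<close>
definition tw_omega :: "('h::ring_1 \<Rightarrow> ('h \<times> 'h) list) \<Rightarrow> ('h \<Rightarrow> 'a::ring_1 \<Rightarrow> 'a) \<Rightarrow> ('h \<Rightarrow> 'h \<Rightarrow> 'a)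
    \<Rightarrow> ('h \<Rightarrow> 'a) \<Rightarrow> ('h \<Rightarrow> 'a) \<Rightarrow> 'h \<Rightarrow> 'h \<Rightarrow> 'a" where
  "tw_omega \<Delta> act \<omega> v vi h g =
     (\<Sum>(h1, h2, h3, h4)\<leftarrow>Delta4 \<Delta> h. \<Sum>(g1, g2, g3)\<leftarrow>Delta3 \<Delta> g.
        v h1 * act h2 (v g1) * \<omega> h3 g2 * vi (h4 * g3))"

end

theory Submission
  imports Defs
begin

text \<open>
Both transforms are convolution products.  For the action,
\<open>h \<cdot>\<^sup>v a = (v * (\<lambda>h. h \<cdot> a) * v\<^sup>-\<^sup>1)(h)\<close>, so the claim for \<open>\<cdot>\<close> is associativity of
convolution.  For the cocycle, regard bilinear maps \<open>H \<times> H \<rightarrow> A\<close> as an algebra under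
convolution; then \<open>\<omega>\<^sup>v = (v \<otimes> \<epsilon>) * (h \<otimes> g \<mapsto> h \<cdot> v(g)) * \<omega> * (v\<^sup>-\<^sup>1 \<circ> m)\<close>.  Expanding
\<open>(\<omega>\<^sup>u)\<^sup>v\<close> in this algebra and using associativity, the contractions
\<open>(u\<^sup>-\<^sup>1 \<circ> m) * (v\<^sup>-\<^sup>1 \<circ> m) = (u\<^sup>-\<^sup>1 * v\<^sup>-\<^sup>1) \<circ> m\<close> (multiplicativity of \<open>\<Delta>\<close>),
\<open>(u\<^sup>-\<^sup>1 \<otimes> \<epsilon>) * (u \<otimes> \<epsilon>) = e \<otimes> \<epsilon>\<close>, \<open>(h \<otimes> g \<mapsto> h \<cdot> v(g)) * (e \<otimes> \<epsilon>) = (h \<otimes> g \<mapsto> h \<cdot> v(g))\<close> and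
\<open>(h \<otimes> g \<mapsto> h \<cdot> v(g)) * (h \<otimes> g \<mapsto> h \<cdot> u(g)) = (h \<otimes> g \<mapsto> h \<cdot> (v * u)(g))\<close>
(the measuring axiom) turn it into \<open>\<omega>\<^sup>v\<^sup>*\<^sup>u\<close>.

Identities between elements of \<open>A\<close> obtained from the Hopf axioms, which are stated for
\<open>k\<close>-valued forms only, are transferred to \<open>A\<close> by testing against all linear functionals.
\<close>

lemma sum_list_split_swap:
  "(\<Sum>(a, b)\<leftarrow>xs. \<Sum>(c, d)\<leftarrow>ys. (f a b c d :: 'a::comm_monoid_add)) =
   (\<Sum>(c, d)\<leftarrow>ys. \<Sum>(a, b)\<leftarrow>xs. f a b c d)"
proof -
  have "(\<Sum>x\<leftarrow>xs. \<Sum>y\<leftarrow>ys. g x y) = (\<Sum>y\<leftarrow>ys. \<Sum>x\<leftarrow>xs. g x y)" for g :: "_ \<Rightarrow> _ \<Rightarrow> 'a"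
    by (induct xs) (auto simp: sum_list_addf)
  from this[of "\<lambda>x y. f (fst x) (snd x) (fst y) (snd y)"] show ?thesis
    by (simp add: split_def)
qed

lemma sum_list_split_cong:
  "(\<And>a b. F a b = G a b) \<Longrightarrow> (\<Sum>(a, b)\<leftarrow>xs. F a b) = (\<Sum>(a, b)\<leftarrow>xs. G a b)"
  by simp

lemma sum_list_split_mult_const:
  "(\<Sum>(a, b)\<leftarrow>xs. F a b) * (c :: 'a::semiring_0) = (\<Sum>(a, b)\<leftarrow>xs. F a b * c)"
  by (induct xs) (auto simp: distrib_right)

lemma sum_list_split_const_mult:
  "(c :: 'a::semiring_0) * (\<Sum>(a, b)\<leftarrow>xs. F a b) = (\<Sum>(a, b)\<leftarrow>xs. c * F a b)"
  by (induct xs) (auto simp: distrib_left)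

lemma sum_list_concat_eq: "sum_list (concat xss) = sum_list (map sum_list xss)"
  by (induct xss) auto

lemma sum_list_Delta3:
  "(\<Sum>(a, b, c)\<leftarrow>Delta3 \<Delta> h. F a b c) =
   (\<Sum>(x, y)\<leftarrow>\<Delta> h. \<Sum>(a, b)\<leftarrow>\<Delta> x. (F a b y :: 'a::comm_monoid_add))"
  unfolding Delta3_def by (simp add: map_concat sum_list_concat_eq o_def split_def)

lemma sum_list_Delta4:
  "(\<Sum>(a, b, c, d)\<leftarrow>Delta4 \<Delta> h. F a b c d) =
   (\<Sum>(X, z)\<leftarrow>\<Delta> h. \<Sum>(x, y)\<leftarrow>\<Delta> X. \<Sum>(a, b)\<leftarrow>\<Delta> x. (F a b y z :: 'a::comm_monoid_add))"
  unfolding Delta4_def Delta3_def by (simp add: map_concat sum_list_concat_eq o_def split_def)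

lemma tw_act_eq_conv: "tw_act \<Delta> act v vi h a = conv \<Delta> (conv \<Delta> v (\<lambda>h. act h a)) vi h"
  unfolding tw_act_def conv_def sum_list_Delta3 by (simp add: sum_list_split_mult_const)

lemma linear_map_add: "Vector_Spaces.linear s1 s2 f \<Longrightarrow> f (x + y) = f x + f y"
  by (simp add: Vector_Spaces.linear_iff)

lemma linear_map_scale: "Vector_Spaces.linear s1 s2 f \<Longrightarrow> f (s1 c x) = s2 c (f x)"
  by (simp add: Vector_Spaces.linear_iff)

lemma linear_map_zero: "Vector_Spaces.linear s1 s2 f \<Longrightarrow> f 0 = 0"
  using linear_map_add[of s1 s2 f 0 0] by simp

lemma linear_map_sum_list:
  "Vector_Spaces.linear s1 s2 f \<Longrightarrow> f (\<Sum>x\<leftarrow>xs. g x) = (\<Sum>x\<leftarrow>xs. f (g x))"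
  by (induct xs) (auto simp: linear_map_add linear_map_zero)

lemma linear_functionals_separate:
  assumes "vector_space (s :: 'k::field \<Rightarrow> 'a::ab_group_add \<Rightarrow> 'a)"
    and "\<And>\<phi>. Vector_Spaces.linear s kscale \<phi> \<Longrightarrow> \<phi> x = \<phi> y"
  shows "x = y"
proof (rule ccontr)
  assume "x \<noteq> y"
  interpret vector_space s by fact
  obtain B where B: "independent B" "UNIV \<subseteq> span B"
    using basis_exists[of UNIV] by blast
  have "{b. representation B (x - y) b \<noteq> 0} \<noteq> {}"
    using sum_nonzero_representation_eq[OF B(1), of "x - y"] B(2) \<open>x \<noteq> y\<close> by force
  then obtain b where b: "representation B (x - y) b \<noteq> 0" by blast
  have lin: "Vector_Spaces.linear s kscale (\<lambda>v. representation B v b)"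
    using linear_representation[OF B(1)] B(2) by auto
  have "representation B (x - y) b = representation B x b - representation B y b"
    using linear_map_add[OF lin, of "x - y" y] by simp
  with assms(2)[OF lin] b show False by simp
qed

context
  fixes smH :: "'k::field \<Rightarrow> 'h::ring_1 \<Rightarrow> 'h"
    and smA :: "'k \<Rightarrow> 'a::ring_1 \<Rightarrow> 'a"
    and \<Delta> :: "'h \<Rightarrow> ('h \<times> 'h) list" and \<epsilon> :: "'h \<Rightarrow> 'k" and S :: "'h \<Rightarrow> 'h"
  assumes hopf: "hopf_algebra smH \<Delta> \<epsilon> S"
    and alg_A: "k_algebra smA"
begin

abbreviation "lin \<equiv> Vector_Spaces.linear smH smA"
abbreviation "bil \<equiv> bilin smH smH smA"

text \<open>\<open>tensor_eps f\<close> is \<open>f \<otimes> \<epsilon>\<close> and \<open>mult_pullback f\<close> is \<open>f \<circ> m\<close>, as elements of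
  \<open>Hom(H \<otimes> H, A)\<close>.\<close>
abbreviation (input) tensor_eps :: "('h \<Rightarrow> 'a) \<Rightarrow> 'h \<Rightarrow> 'h \<Rightarrow> 'a"
  where "tensor_eps f \<equiv> \<lambda>h g. smA (\<epsilon> g) (f h)"

abbreviation (input) mult_pullback :: "('h \<Rightarrow> 'a) \<Rightarrow> 'h \<Rightarrow> 'h \<Rightarrow> 'a"
  where "mult_pullback f \<equiv> \<lambda>h g. f (h * g)"

lemma vector_space_H: "vector_space smH"
  using hopf unfolding hopf_algebra_def k_algebra_def by blast

lemma vector_space_A: "vector_space smA"
  using alg_A unfolding k_algebra_def by blast

interpretation A: vector_space smA by (rule vector_space_A)

lemma smA_mult_left: "smA c (x * y) = smA c x * y"
  and smA_mult_right: "smA c (x * y) = x * smA c y"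
  using alg_A unfolding k_algebra_def by blast+

lemma smH_mult_left: "smH c (x * y) = smH c x * y"
  and smH_mult_right: "smH c (x * y) = x * smH c y"
  using hopf unfolding hopf_algebra_def k_algebra_def by blast+

lemma linI: "(\<And>x y. f (x + y) = f x + f y) \<Longrightarrow> (\<And>c x. f (smH c x) = smA c (f x)) \<Longrightarrow> lin f"
  using vector_space_H vector_space_A by (simp add: Vector_Spaces.linear_iff)

lemma bilI: "(\<And>x. lin (F x)) \<Longrightarrow> (\<And>y. lin (\<lambda>x. F x y)) \<Longrightarrow> bil F"
  by (simp add: bilin_def)

lemma bilD: "bil F \<Longrightarrow> lin (\<lambda>x. F x y)" "bil F \<Longrightarrow> lin (F x)"
  by (simp_all add: bilin_def)

lemma trilI:
  "(\<And>y z. lin (\<lambda>x. F x y z)) \<Longrightarrow> (\<And>x z. lin (\<lambda>y. F x y z)) \<Longrightarrow> (\<And>x y. lin (F x y))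
   \<Longrightarrow> trilin smH smA F"
  by (simp add: trilin_def)

lemma linear_functional_comp:
  "Vector_Spaces.linear smA kscale \<phi> \<Longrightarrow> lin f \<Longrightarrow> Vector_Spaces.linear smH kscale (\<lambda>x. \<phi> (f x))"
  using Vector_Spaces.linear_compose[of smH smA f kscale \<phi>] by (simp add: o_def)

lemma functional_sum_list_split:
  "Vector_Spaces.linear smA kscale \<phi> \<Longrightarrow> \<phi> (\<Sum>(x, y)\<leftarrow>xs. F x y) = (\<Sum>(x, y)\<leftarrow>xs. \<phi> (F x y))"
  using linear_map_sum_list[of smA kscale \<phi> "\<lambda>(x, y). F x y" xs] by (simp add: split_def)

lemma functionals_separate_A: "(\<And>\<phi>. Vector_Spaces.linear smA kscale \<phi> \<Longrightarrow> \<phi> x = \<phi> y) \<Longrightarrow> x = y"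
  using linear_functionals_separate[OF vector_space_A] by blast

lemma lin_Sweedler_sum:
  assumes "bil F"
  shows "lin (\<lambda>h. \<Sum>(x, y)\<leftarrow>\<Delta> h. F x y)"
proof (rule linI; rule functionals_separate_A)
  fix \<phi> :: "'a \<Rightarrow> 'k" assume \<phi>: "Vector_Spaces.linear smA kscale \<phi>"
  have "bilin smH smH kscale (\<lambda>x y. \<phi> (F x y))"
    using assms linear_functional_comp[OF \<phi>] unfolding bilin_def by auto
  with hopf \<phi> show
    "\<phi> (\<Sum>(x, y)\<leftarrow>\<Delta> (g + h). F x y) = \<phi> ((\<Sum>(x, y)\<leftarrow>\<Delta> g. F x y) + (\<Sum>(x, y)\<leftarrow>\<Delta> h. F x y))"
    "\<phi> (\<Sum>(x, y)\<leftarrow>\<Delta> (smH c h). F x y) = \<phi> (smA c (\<Sum>(x, y)\<leftarrow>\<Delta> h. F x y))" for g h c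
    by (simp_all add: hopf_algebra_def functional_sum_list_split linear_map_add linear_map_scale)
qed

lemma Sweedler_coassoc:
  assumes "trilin smH smA F"
  shows "(\<Sum>(x, y)\<leftarrow>\<Delta> h. \<Sum>(x1, x2)\<leftarrow>\<Delta> x. F x1 x2 y) = (\<Sum>(x, y)\<leftarrow>\<Delta> h. \<Sum>(y1, y2)\<leftarrow>\<Delta> y. F x y1 y2)"
proof (rule functionals_separate_A)
  fix \<phi> :: "'a \<Rightarrow> 'k" assume \<phi>: "Vector_Spaces.linear smA kscale \<phi>"
  have "trilin smH kscale (\<lambda>x y z. \<phi> (F x y z))"
    using assms linear_functional_comp[OF \<phi>] unfolding trilin_def by blast
  with hopf \<phi> show "\<phi> (\<Sum>(x, y)\<leftarrow>\<Delta> h. \<Sum>(x1, x2)\<leftarrow>\<Delta> x. F x1 x2 y) =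
    \<phi> (\<Sum>(x, y)\<leftarrow>\<Delta> h. \<Sum>(y1, y2)\<leftarrow>\<Delta> y. F x y1 y2)"
    by (simp add: hopf_algebra_def functional_sum_list_split)
qed

lemma Sweedler_mult:
  assumes "bil F"
  shows "(\<Sum>(x, y)\<leftarrow>\<Delta> (g * h). F x y) = (\<Sum>(a, b)\<leftarrow>\<Delta> g. \<Sum>(c, d)\<leftarrow>\<Delta> h. F (a * c) (b * d))"
proof (rule functionals_separate_A)
  fix \<phi> :: "'a \<Rightarrow> 'k" assume \<phi>: "Vector_Spaces.linear smA kscale \<phi>"
  have "bilin smH smH kscale (\<lambda>x y. \<phi> (F x y))"
    using assms linear_functional_comp[OF \<phi>] unfolding bilin_def by auto
  with hopf \<phi> show "\<phi> (\<Sum>(x, y)\<leftarrow>\<Delta> (g * h). F x y) =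
    \<phi> (\<Sum>(a, b)\<leftarrow>\<Delta> g. \<Sum>(c, d)\<leftarrow>\<Delta> h. F (a * c) (b * d))"
    by (simp add: hopf_algebra_def functional_sum_list_split)
qed

lemma Sweedler_counit_left:
  assumes "lin f"
  shows "(\<Sum>(x, y)\<leftarrow>\<Delta> h. smA (\<epsilon> x) (f y)) = f h"
proof -
  have "f h = f (\<Sum>(x, y)\<leftarrow>\<Delta> h. smH (\<epsilon> x) y)" using hopf by (simp add: hopf_algebra_def)
  then show ?thesis
    using linear_map_sum_list[OF assms, of "\<lambda>(x, y). smH (\<epsilon> x) y" "\<Delta> h"]
    by (simp add: split_def linear_map_scale[OF assms])
qed

lemma Sweedler_counit_right:
  assumes "lin f"
  shows "(\<Sum>(x, y)\<leftarrow>\<Delta> h. smA (\<epsilon> y) (f x)) = f h"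
proof -
  have "f h = f (\<Sum>(x, y)\<leftarrow>\<Delta> h. smH (\<epsilon> y) x)" using hopf by (simp add: hopf_algebra_def)
  then show ?thesis
    using linear_map_sum_list[OF assms, of "\<lambda>(x, y). smH (\<epsilon> y) x" "\<Delta> h"]
    by (simp add: split_def linear_map_scale[OF assms])
qed

lemma lin_eps_scale: "lin (\<lambda>g. smA (\<epsilon> g) w)"
proof -
  have "Vector_Spaces.linear smH kscale \<epsilon>" using hopf by (simp add: hopf_algebra_def)
  then show ?thesis
    by (intro linI) (simp_all add: linear_map_add linear_map_scale A.scale_left_distrib)
qed

lemma lin_mult_right: "lin f \<Longrightarrow> lin (\<lambda>x. f x * c)"
  by (rule linI) (simp_all add: linear_map_add linear_map_scale distrib_right smA_mult_left)

lemma lin_mult_left: "lin f \<Longrightarrow> lin (\<lambda>x. c * f x)"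
  by (rule linI) (simp_all add: linear_map_add linear_map_scale distrib_left smA_mult_right)

lemma lin_scale: "lin f \<Longrightarrow> lin (\<lambda>x. smA c (f x))"
  by (rule linI) (simp_all add: linear_map_add linear_map_scale A.scale_right_distrib mult.commute)

lemma lin_sum_list_split:
  assumes "\<And>a b. lin (\<lambda>x. G x a b)"
  shows "lin (\<lambda>x. \<Sum>(a, b)\<leftarrow>xs. G x a b)"
  by (intro linI; induct xs)
     (auto simp: linear_map_add[OF assms] linear_map_scale[OF assms] A.scale_right_distrib
        split: prod.splits)

lemma lin_conv: "lin f \<Longrightarrow> lin g \<Longrightarrow> lin (conv \<Delta> f g)"
  unfolding conv_def by (intro lin_Sweedler_sum bilI lin_mult_right lin_mult_left)

lemma conv_assoc:
  assumes "lin f" "lin g" "lin k"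
  shows "conv \<Delta> (conv \<Delta> f g) k = conv \<Delta> f (conv \<Delta> g k)"
proof
  fix h
  have "conv \<Delta> (conv \<Delta> f g) k h = (\<Sum>(x, y)\<leftarrow>\<Delta> h. \<Sum>(x1, x2)\<leftarrow>\<Delta> x. f x1 * g x2 * k y)"
    by (simp add: conv_def sum_list_split_mult_const)
  also have "\<dots> = (\<Sum>(x, y)\<leftarrow>\<Delta> h. \<Sum>(y1, y2)\<leftarrow>\<Delta> y. f x * g y1 * k y2)"
    using assms by (intro Sweedler_coassoc trilI lin_mult_right lin_mult_left)
  also have "\<dots> = conv \<Delta> f (conv \<Delta> g k) h"
    by (simp add: conv_def sum_list_split_const_mult mult.assoc)
  finally show "conv \<Delta> (conv \<Delta> f g) k h = conv \<Delta> f (conv \<Delta> g k) h" .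
qed

lemma bil_conv2: "bil F \<Longrightarrow> bil G \<Longrightarrow> bil (conv2 \<Delta> F G)"
  unfolding conv2_def
  by (intro bilI lin_Sweedler_sum lin_sum_list_split lin_mult_right lin_mult_left; rule bilD)

lemma conv2_assoc:
  assumes F: "bil F" and G: "bil G" and K: "bil K"
  shows "conv2 \<Delta> (conv2 \<Delta> F G) K = conv2 \<Delta> F (conv2 \<Delta> G K)"
proof (intro ext)
  fix h l
  note lins = lin_sum_list_split lin_mult_right lin_mult_left bilD[OF F] bilD[OF G] bilD[OF K]
  have "conv2 \<Delta> (conv2 \<Delta> F G) K h l =
     (\<Sum>(x, y)\<leftarrow>\<Delta> h. \<Sum>(p, q)\<leftarrow>\<Delta> l. \<Sum>(x1, x2)\<leftarrow>\<Delta> x. \<Sum>(p1, p2)\<leftarrow>\<Delta> p. F x1 p1 * G x2 p2 * K y q)"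
    by (simp add: conv2_def sum_list_split_mult_const)
  also have "\<dots> = (\<Sum>(x, y)\<leftarrow>\<Delta> h. \<Sum>(x1, x2)\<leftarrow>\<Delta> x. \<Sum>(p, q)\<leftarrow>\<Delta> l. \<Sum>(p1, p2)\<leftarrow>\<Delta> p.
      F x1 p1 * G x2 p2 * K y q)"
    by (rule sum_list_split_cong, rule sum_list_split_swap)
  also have "\<dots> = (\<Sum>(x, y)\<leftarrow>\<Delta> h. \<Sum>(y1, y2)\<leftarrow>\<Delta> y. \<Sum>(p, q)\<leftarrow>\<Delta> l. \<Sum>(p1, p2)\<leftarrow>\<Delta> p.
      F x p1 * G y1 p2 * K y2 q)"
    by (intro Sweedler_coassoc trilI lins)
  also have "\<dots> = (\<Sum>(x, y)\<leftarrow>\<Delta> h. \<Sum>(y1, y2)\<leftarrow>\<Delta> y. \<Sum>(p, q)\<leftarrow>\<Delta> l. \<Sum>(q1, q2)\<leftarrow>\<Delta> q.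
      F x p * G y1 q1 * K y2 q2)"
    by (intro sum_list_split_cong Sweedler_coassoc trilI lins)
  also have "\<dots> = (\<Sum>(x, y)\<leftarrow>\<Delta> h. \<Sum>(p, q)\<leftarrow>\<Delta> l. \<Sum>(y1, y2)\<leftarrow>\<Delta> y. \<Sum>(q1, q2)\<leftarrow>\<Delta> q.
      F x p * G y1 q1 * K y2 q2)"
    by (rule sum_list_split_cong, rule sum_list_split_swap)
  also have "\<dots> = conv2 \<Delta> F (conv2 \<Delta> G K) h l"
    by (simp add: conv2_def sum_list_split_const_mult mult.assoc)
  finally show "conv2 \<Delta> (conv2 \<Delta> F G) K h l = conv2 \<Delta> F (conv2 \<Delta> G K) h l" .
qed

lemma conv2_assoc_subst:
  "bil X \<Longrightarrow> bil Y \<Longrightarrow> bil Z \<Longrightarrow> conv2 \<Delta> X Y = P \<Longrightarrow> conv2 \<Delta> X (conv2 \<Delta> Y Z) = conv2 \<Delta> P Z"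
  using conv2_assoc by metis

lemma bil_tensor_eps: "lin f \<Longrightarrow> bil (tensor_eps f)"
  by (intro bilI lin_scale lin_eps_scale)

lemma bil_mult_pullback: "lin f \<Longrightarrow> bil (mult_pullback f)"
  by (intro bilI linI)
     (simp_all add: linear_map_add linear_map_scale distrib_left distrib_right
        smH_mult_left[symmetric] smH_mult_right[symmetric])

lemma conv2_tensor_eps_left:
  "(\<And>b. lin (K b)) \<Longrightarrow> conv2 \<Delta> (tensor_eps f) K h g = (\<Sum>(a, b)\<leftarrow>\<Delta> h. f a * K b g)"
  unfolding conv2_def
  by (intro sum_list_split_cong)
     (simp add: smA_mult_left[symmetric] Sweedler_counit_left lin_mult_left)

lemma conv2_tensor_eps_right:
  "(\<And>a. lin (K a)) \<Longrightarrow> conv2 \<Delta> K (tensor_eps f) h g = (\<Sum>(a, b)\<leftarrow>\<Delta> h. K a g * f b)"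
  unfolding conv2_def
  by (intro sum_list_split_cong)
     (simp add: smA_mult_right[symmetric] Sweedler_counit_right lin_mult_right)

lemma smA_sum_list_split: "smA c (\<Sum>(a, b)\<leftarrow>xs. F a b) = (\<Sum>(a, b)\<leftarrow>xs. smA c (F a b))"
  by (induct xs) (auto simp: A.scale_right_distrib)

lemma conv2_tensor_eps: "conv2 \<Delta> (tensor_eps f) (tensor_eps k) = tensor_eps (conv \<Delta> f k)"
  by (intro ext)
     (simp add: conv2_tensor_eps_right lin_eps_scale conv_def smA_sum_list_split smA_mult_left)

lemma conv2_mult_pullback:
  assumes "lin f" "lin k"
  shows "conv2 \<Delta> (mult_pullback f) (mult_pullback k) = mult_pullback (conv \<Delta> f k)"
proof (intro ext)
  fix h g
  have "bil (\<lambda>x y. f x * k y)" using assms by (intro bilI lin_mult_left lin_mult_right)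
  then show "conv2 \<Delta> (mult_pullback f) (mult_pullback k) h g = mult_pullback (conv \<Delta> f k) h g"
    by (simp add: conv_def conv2_def Sweedler_mult)
qed

lemma tw_omega_eq_conv2:
  assumes "\<And>b. lin (\<lambda>d. act b (v d))"
  shows "tw_omega \<Delta> act \<omega> v vi h g =
    conv2 \<Delta> (conv2 \<Delta> (conv2 \<Delta> (tensor_eps v) (\<lambda>h g. act h (v g))) \<omega>) (mult_pullback vi) h g"
proof -
  have "conv2 \<Delta> (tensor_eps v) (\<lambda>h g. act h (v g)) = (\<lambda>x g. \<Sum>(a, b)\<leftarrow>\<Delta> x. v a * act b (v g))"
    by (intro ext conv2_tensor_eps_left assms)
  then have "conv2 \<Delta> (conv2 \<Delta> (conv2 \<Delta> (tensor_eps v) (\<lambda>h g. act h (v g))) \<omega>) (mult_pullback vi) h g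
    = (\<Sum>(X, y)\<leftarrow>\<Delta> h. \<Sum>(p, q)\<leftarrow>\<Delta> g. \<Sum>(x, z)\<leftarrow>\<Delta> X. \<Sum>(p1, p2)\<leftarrow>\<Delta> p. \<Sum>(a, b)\<leftarrow>\<Delta> x.
          v a * act b (v p1) * \<omega> z p2 * vi (y * q))"
    by (simp add: conv2_def sum_list_split_mult_const)
  also have "\<dots> = (\<Sum>(X, y)\<leftarrow>\<Delta> h. \<Sum>(p, q)\<leftarrow>\<Delta> g. \<Sum>(x, z)\<leftarrow>\<Delta> X. \<Sum>(a, b)\<leftarrow>\<Delta> x. \<Sum>(p1, p2)\<leftarrow>\<Delta> p.
          v a * act b (v p1) * \<omega> z p2 * vi (y * q))"
    by (rule sum_list_split_cong, rule sum_list_split_cong, rule sum_list_split_cong,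
        rule sum_list_split_swap)
  also have "\<dots> = (\<Sum>(X, y)\<leftarrow>\<Delta> h. \<Sum>(x, z)\<leftarrow>\<Delta> X. \<Sum>(a, b)\<leftarrow>\<Delta> x. \<Sum>(p, q)\<leftarrow>\<Delta> g. \<Sum>(p1, p2)\<leftarrow>\<Delta> p.
          v a * act b (v p1) * \<omega> z p2 * vi (y * q))"
    by (rule sum_list_split_cong, rule sum_list_split_swap[THEN trans],
        rule sum_list_split_cong, rule sum_list_split_swap)
  also have "\<dots> = tw_omega \<Delta> act \<omega> v vi h g"
    unfolding tw_omega_def sum_list_Delta4 sum_list_Delta3 ..
  finally show ?thesis by simp
qed

context
  fixes act :: "'h \<Rightarrow> 'a \<Rightarrow> 'a" and \<omega> :: "'h \<Rightarrow> 'h \<Rightarrow> 'a"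
  assumes tpa: "twisted_partial_action smH smA \<Delta> act \<omega>"
begin

abbreviation (input) act_after :: "('h \<Rightarrow> 'a) \<Rightarrow> 'h \<Rightarrow> 'h \<Rightarrow> 'a"
  where "act_after f \<equiv> \<lambda>h g. act h (f g)"

lemma lin_act_left: "lin (\<lambda>h. act h a)"
  and linear_act_right: "Vector_Spaces.linear smA smA (act h)"
  and bil_omega: "bil \<omega>"
  and act_mult: "act h (a * b) = (\<Sum>(x, y)\<leftarrow>\<Delta> h. act x a * act y b)"
  using tpa unfolding twisted_partial_action_def bilin_def by blast+

lemma lin_act_comp: "lin f \<Longrightarrow> lin (\<lambda>g. act h (f g))"
  using Vector_Spaces.linear_compose[OF _ linear_act_right] by (simp add: o_def)

lemma bil_act_after: "lin f \<Longrightarrow> bil (act_after f)"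
  by (intro bilI lin_act_comp lin_act_left)

lemma conv2_act_after_unit:
  "lin f \<Longrightarrow> conv2 \<Delta> (act_after f) (tensor_eps (\<lambda>h. act h 1)) = act_after f"
  by (intro ext) (simp add: conv2_tensor_eps_right lin_act_comp act_mult[of _ _ 1, symmetric])

lemma conv2_act_after: "conv2 \<Delta> (act_after f) (act_after k) = act_after (conv \<Delta> f k)"
proof (intro ext)
  fix h g
  have "conv2 \<Delta> (act_after f) (act_after k) h g =
      (\<Sum>(c, d)\<leftarrow>\<Delta> g. \<Sum>(a, b)\<leftarrow>\<Delta> h. act a (f c) * act b (k d))"
    unfolding conv2_def by (rule sum_list_split_swap)
  also have "\<dots> = (\<Sum>(c, d)\<leftarrow>\<Delta> g. act h (f c * k d))" by (simp add: act_mult)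
  also have "\<dots> = act h (conv \<Delta> f k g)"
    by (simp add: conv_def split_def linear_map_sum_list[OF linear_act_right])
  finally show "conv2 \<Delta> (act_after f) (act_after k) h g = act_after (conv \<Delta> f k) h g" .
qed

lemma tw_act_after_eq_conv2:
  assumes "lin u" "lin v"
  shows "(\<lambda>h g. tw_act \<Delta> act u ui h (v g)) = conv2 \<Delta> (conv2 \<Delta> (tensor_eps u) (act_after v)) (tensor_eps ui)"
proof (intro ext)
  fix h g
  have "bil (conv2 \<Delta> (tensor_eps u) (act_after v))"
    using assms by (intro bil_conv2 bil_tensor_eps bil_act_after)
  then have "conv2 \<Delta> (conv2 \<Delta> (tensor_eps u) (act_after v)) (tensor_eps ui) h g
     = (\<Sum>(a, b)\<leftarrow>\<Delta> h. (\<Sum>(c, d)\<leftarrow>\<Delta> a. u c * act d (v g)) * ui b)"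
    using assms by (simp add: conv2_tensor_eps_right conv2_tensor_eps_left bilD lin_act_comp)
  also have "\<dots> = tw_act \<Delta> act u ui h (v g)" by (simp add: tw_act_eq_conv conv_def)
  finally show "tw_act \<Delta> act u ui h (v g) =
    conv2 \<Delta> (conv2 \<Delta> (tensor_eps u) (act_after v)) (tensor_eps ui) h g" ..
qed

lemma tw_omega_tw_omega_eq_conv2:
  assumes lin: "lin u" "lin v" "lin ui" "lin vi"
  shows "tw_omega \<Delta> (tw_act \<Delta> act u ui) (tw_omega \<Delta> act \<omega> u ui) v vi =
    conv2 \<Delta> (tensor_eps v) (conv2 \<Delta> (tensor_eps u) (conv2 \<Delta> (act_after v) (conv2 \<Delta> (tensor_eps ui)
      (conv2 \<Delta> (tensor_eps u) (conv2 \<Delta> (act_after u) (conv2 \<Delta> \<omega>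
        (conv2 \<Delta> (mult_pullback ui) (mult_pullback vi))))))))"
proof (intro ext)
  fix h g
  have lin_tw_act: "lin (\<lambda>d. tw_act \<Delta> act u ui b (v d))" for b
    using lin unfolding tw_act_eq_conv conv_def
    by (intro lin_sum_list_split lin_mult_right lin_mult_left lin_act_comp)
  have tw_omega_u: "tw_omega \<Delta> act \<omega> u ui =
      conv2 \<Delta> (conv2 \<Delta> (conv2 \<Delta> (tensor_eps u) (act_after u)) \<omega>) (mult_pullback ui)"
    using lin by (intro ext tw_omega_eq_conv2 lin_act_comp)
  show "tw_omega \<Delta> (tw_act \<Delta> act u ui) (tw_omega \<Delta> act \<omega> u ui) v vi h g = conv2 \<Delta> (tensor_eps v)
    (conv2 \<Delta> (tensor_eps u) (conv2 \<Delta> (act_after v) (conv2 \<Delta> (tensor_eps ui) (conv2 \<Delta> (tensor_eps u)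
      (conv2 \<Delta> (act_after u) (conv2 \<Delta> \<omega> (conv2 \<Delta> (mult_pullback ui) (mult_pullback vi)))))))) h g"
    using lin
    by (simp add: tw_omega_eq_conv2[of "tw_act \<Delta> act u ui" v, OF lin_tw_act] tw_act_after_eq_conv2 tw_omega_u conv2_assoc
        bil_conv2 bil_tensor_eps bil_act_after bil_mult_pullback bil_omega)
qed

lemma tw_omega_conv:
  assumes lin: "lin u" "lin v" "lin ui" "lin vi"
    and inv: "conv \<Delta> ui u = (\<lambda>h. act h 1)"
  shows "tw_omega \<Delta> act \<omega> (conv \<Delta> v u) (conv \<Delta> ui vi) =
    tw_omega \<Delta> (tw_act \<Delta> act u ui) (tw_omega \<Delta> act \<omega> u ui) v vi"
proof -
  let ?c = "conv2 \<Delta>" and ?vu = "conv \<Delta> v u" and ?M = "mult_pullback (conv \<Delta> ui vi)"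
  have lin_vu: "lin ?vu" "lin (conv \<Delta> ui vi)" by (simp_all add: lin_conv lin)
  note bils = bil_conv2 bil_tensor_eps bil_act_after bil_mult_pullback bil_omega lin lin_vu
    lin_act_left
  have "tw_omega \<Delta> (tw_act \<Delta> act u ui) (tw_omega \<Delta> act \<omega> u ui) v vi =
    ?c (tensor_eps v) (?c (tensor_eps u) (?c (act_after v) (?c (tensor_eps ui)
      (?c (tensor_eps u) (?c (act_after u) (?c \<omega> ?M))))))"
    using lin by (simp add: tw_omega_tw_omega_eq_conv2 conv2_mult_pullback)
  also have "?c (tensor_eps ui) (?c (tensor_eps u) (?c (act_after u) (?c \<omega> ?M))) =
      ?c (tensor_eps (\<lambda>h. act h 1)) (?c (act_after u) (?c \<omega> ?M))"
    by (rule conv2_assoc_subst) (simp_all add: bils conv2_tensor_eps inv)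
  also have "?c (act_after v) (?c (tensor_eps (\<lambda>h. act h 1)) (?c (act_after u) (?c \<omega> ?M))) =
      ?c (act_after v) (?c (act_after u) (?c \<omega> ?M))"
    by (rule conv2_assoc_subst) (simp_all add: bils conv2_act_after_unit)
  also have "?c (act_after v) (?c (act_after u) (?c \<omega> ?M)) = ?c (act_after ?vu) (?c \<omega> ?M)"
    by (rule conv2_assoc_subst) (simp_all add: bils conv2_act_after)
  also have "?c (tensor_eps v) (?c (tensor_eps u) (?c (act_after ?vu) (?c \<omega> ?M))) =
      ?c (tensor_eps ?vu) (?c (act_after ?vu) (?c \<omega> ?M))"
    by (rule conv2_assoc_subst) (simp_all add: bils conv2_tensor_eps)
  also have "\<dots> = ?c (?c (?c (tensor_eps ?vu) (act_after ?vu)) \<omega>) ?M"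
    by (simp add: conv2_assoc bils)
  also have "\<dots> = tw_omega \<Delta> act \<omega> ?vu (conv \<Delta> ui vi)"
    by (intro ext tw_omega_eq_conv2[symmetric] lin_act_comp lin_vu)
  finally show ?thesis by (rule sym)
qed

lemma tw_act_conv:
  assumes "lin u" "lin v" "lin ui" "lin vi"
  shows "tw_act \<Delta> act (conv \<Delta> v u) (conv \<Delta> ui vi) h a = tw_act \<Delta> (tw_act \<Delta> act u ui) v vi h a"
proof -
  have "(\<lambda>h. tw_act \<Delta> act u ui h a) = conv \<Delta> (conv \<Delta> u (\<lambda>h. act h a)) ui"
    by (intro ext tw_act_eq_conv)
  then show ?thesis
    unfolding tw_act_eq_conv[of _ _ _ _ h]
    using assms lin_act_left[of a] by (simp add: conv_assoc lin_conv)
qed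

end

end

theorem lemma5p3:
  fixes smH :: "'k::field \<Rightarrow> 'h::ring_1 \<Rightarrow> 'h"
    and smA :: "'k \<Rightarrow> 'a::ring_1 \<Rightarrow> 'a"
    and \<Delta> :: "'h \<Rightarrow> ('h \<times> 'h) list" and \<epsilon> :: "'h \<Rightarrow> 'k" and S :: "'h \<Rightarrow> 'h"
    and act :: "'h \<Rightarrow> 'a \<Rightarrow> 'a" and \<omega> :: "'h \<Rightarrow> 'h \<Rightarrow> 'a"
    and u v ui vi :: "'h \<Rightarrow> 'a"
  assumes "hopf_algebra smH \<Delta> \<epsilon> S"
    and "k_algebra smA"
    and "symmetric_tpa smH smA \<Delta> \<epsilon> act \<omega>"
    and "Vector_Spaces.linear smH smA u" and "Vector_Spaces.linear smH smA v"
    and "weak_conv_inverse smH smA \<Delta> act u ui"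
    and "weak_conv_inverse smH smA \<Delta> act v vi"
    and "weak_conv_inverse smH smA \<Delta> act (conv \<Delta> v u) (conv \<Delta> ui vi)"
  shows "tw_omega \<Delta> act \<omega> (conv \<Delta> v u) (conv \<Delta> ui vi)
           = tw_omega \<Delta> (tw_act \<Delta> act u ui) (tw_omega \<Delta> act \<omega> u ui) v vi
         \<and> (\<forall>h a. tw_act \<Delta> act (conv \<Delta> v u) (conv \<Delta> ui vi) h a
           = tw_act \<Delta> (tw_act \<Delta> act u ui) v vi h a)"
proof -
  have tpa: "twisted_partial_action smH smA \<Delta> act \<omega>"
    using assms(3) by (simp add: symmetric_tpa_def)
  have lin_ui: "Vector_Spaces.linear smH smA ui" and inv: "conv \<Delta> ui u = (\<lambda>h. act h 1)"
    using assms(6) by (simp_all add: weak_conv_inverse_def)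
  have lin_vi: "Vector_Spaces.linear smH smA vi"
    using assms(7) by (simp add: weak_conv_inverse_def)
  show ?thesis
    using tw_omega_conv[OF assms(1,2) tpa assms(4,5) lin_ui lin_vi inv]
      tw_act_conv[OF assms(1,2) tpa assms(4,5) lin_ui lin_vi] by blast
qed

end
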